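(* Let $H^n$ be a binary Hamming code of length $n=2^k-1$ and $\lambda:H^n\to\{0,1\}$ a Boolean function with $\lambda(0^n)=0$. For $m=2^j(n+1)-1$, $j\ge 0$, define Hamming codes recursively by $H^{2m+1}=\{(x+y,|x|,x)\mid x\in F^m,\ y\in H^m\}$, and define $\lambda_m:H^m\to\{0,1\}$ by $\lambda_n=\lambda$ and $\lambda_{2m+1}(w)=\lambda_m(y)$ whenever $w\in (y,0^{m+1})+R^{2m+1}_{m+1}$, $y\in H^m$. Let $C_0=V_{H^n}^\lambda=\{(x+y,|x|+\lambda(y),x)\mid x\in F^n, y\in H^n\}$, $C_{i+1}=\{(x+y,|x|,x)\mid x\in F^{\ell_i},\ y\in C_i\}$ where $\ell_i$ is the length of $C_i$, let $s\ge 0$ and $C=C_s$, of length $N=2^{s+1}(n+1)-1$. Then: 1. $C$ is equivalent to the code $V_{H^{(N-1)/2}}^{\lambda_{(N-1)/2}}=\{(x+y,|x|+\lambda_{(N-1)/2}(y),x)\mid x\in F^{(N-1)/2},\ y\in H^{(N-1)/2}\}$. 2. If $R_j^{(N-1)/2}$ (a component of $H^{(N-1)/2}$, $1\le j\le (N-1)/2$) pierces the zeros and ones of $\lambda_{(N-1)/2}$, then the components $R_j^N$ and $R_{j+(N+1)/2}^N$ of $H^N$ pierce the zeros and ones of $\lambda_N$.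
   Context: $|x|=x_1+\dots+x_m\pmod 2$ for $x\in F^m$. For a binary perfect code of length $m$ (here a Hamming code $H^m$) and $i\in\{1,\dots,m\}$, the (linear) $i$-component $R_i^m$ is the linear span of the weight-3 codewords whose support contains $i$; for $H^{2m+1}$ as defined, $R^{2m+1}_{m+1}=\{(x,|x|,x)\mid x\in F^m\}$, and its cosets $(y,0^{m+1})+R^{2m+1}_{m+1}$, $y\in H^m$, partition $H^{2m+1}$. A component $R$ pierces the zeros and ones of a function $\mu$ if $R$ contains both codewords where $\mu=0$ and codewords where $\mu=1$. Two codes of length $N$ are equivalent if one is mapped onto the other by an automorphism of $F^N$ (a translation followed by a coordinate permutation). *)

theory Defs
  imports Main
begin

text \<open>Binary vectors of length m are boolean lists of length m (False = 0, True = 1).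
  Coordinates are numbered 1..m in the paper; coordinate i is list index i - 1.\<close>

type_synonym vec = "bool list"

definition F :: "nat \<Rightarrow> vec set" where
  "F m = {x. length x = m}"

definition vadd :: "vec \<Rightarrow> vec \<Rightarrow> vec" where
  "vadd x y = map2 (\<noteq>) x y"

definition zerov :: "nat \<Rightarrow> vec" where
  "zerov m = replicate m False"

definition wt :: "vec \<Rightarrow> nat" where
  "wt x = length (filter id x)"

definition par :: "vec \<Rightarrow> bool" where
  "par x = odd (wt x)"

definition hdist :: "vec \<Rightarrow> vec \<Rightarrow> nat" where
  "hdist x y = wt (vadd x y)"

definition is_hamming_code :: "nat \<Rightarrow> vec set \<Rightarrow> bool" where
  "is_hamming_code n H \<longleftrightarrow> H \<subseteq> F n \<and> zerov n \<in> H \<and>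
     (\<forall>x\<in>H. \<forall>y\<in>H. vadd x y \<in> H) \<and>
     (\<forall>v\<in>F n. \<exists>!c. c \<in> H \<and> hdist v c \<le> 1)"

definition double :: "nat \<Rightarrow> vec set \<Rightarrow> vec set" where
  "double m C = {vadd x y @ [par x] @ x | x y. x \<in> F m \<and> y \<in> C}"

definition Vcode :: "nat \<Rightarrow> vec set \<Rightarrow> (vec \<Rightarrow> bool) \<Rightarrow> vec set" where
  "Vcode m H l = {vadd x y @ [par x \<noteq> l y] @ x | x y. x \<in> F m \<and> y \<in> H}"

definition hlen :: "nat \<Rightarrow> nat \<Rightarrow> nat" where
  "hlen n j = 2 ^ j * (n + 1) - 1"

text \<open>hamH n H j = H^(hlen n j), defined recursively via H^(2m+1).\<close>
primrec hamH :: "nat \<Rightarrow> vec set \<Rightarrow> nat \<Rightarrow> vec set" where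
  "hamH n H 0 = H"
| "hamH n H (Suc j) = double (hlen n j) (hamH n H j)"

text \<open>lamseq n H l j = lambda_(hlen n j): lambda_(2m+1)(w) = lambda_m(y) whenever
  w lies in (y,0^(m+1)) + R^(2m+1)_(m+1), y in H^m, where
  R^(2m+1)_(m+1) = {(x,|x|,x) | x in F^m}.\<close>
primrec lamseq :: "nat \<Rightarrow> vec set \<Rightarrow> (vec \<Rightarrow> bool) \<Rightarrow> nat \<Rightarrow> vec \<Rightarrow> bool" where
  "lamseq n H l 0 = l"
| "lamseq n H l (Suc j) = (\<lambda>w. lamseq n H l j
      (THE y. y \<in> hamH n H j \<and>
         (\<exists>x \<in> F (hlen n j). w = vadd (y @ zerov (hlen n j + 1)) (x @ [par x] @ x))))"

text \<open>C_0 = V_(H^n)^lambda, C_(i+1) = {(x+y,|x|,x) | x in F^(l_i), y in C_i},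
  where l_i = length of C_i = hlen n (i+1).\<close>
primrec Cseq :: "nat \<Rightarrow> vec set \<Rightarrow> (vec \<Rightarrow> bool) \<Rightarrow> nat \<Rightarrow> vec set" where
  "Cseq n H l 0 = Vcode n H l"
| "Cseq n H l (Suc i) = double (hlen n (Suc i)) (Cseq n H l i)"

inductive_set gf2span :: "nat \<Rightarrow> vec set \<Rightarrow> vec set" for m S where
  zero: "zerov m \<in> gf2span m S"
| base: "x \<in> S \<Longrightarrow> x \<in> gf2span m S"
| add: "x \<in> gf2span m S \<Longrightarrow> y \<in> gf2span m S \<Longrightarrow> vadd x y \<in> gf2span m S"

definition component :: "nat \<Rightarrow> vec set \<Rightarrow> nat \<Rightarrow> vec set" where
  "component m H i = gf2span m {c \<in> H. wt c = 3 \<and> c ! (i - 1)}"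

definition pierces :: "vec set \<Rightarrow> (vec \<Rightarrow> bool) \<Rightarrow> bool" where
  "pierces R mu \<longleftrightarrow> (\<exists>c\<in>R. mu c = False) \<and> (\<exists>c\<in>R. mu c = True)"

definition codes_equiv :: "nat \<Rightarrow> vec set \<Rightarrow> vec set \<Rightarrow> bool" where
  "codes_equiv N A B \<longleftrightarrow> (\<exists>a \<pi>. a \<in> F N \<and> bij_betw \<pi> {..<N} {..<N} \<and>
     B = (\<lambda>c. map (\<lambda>i. vadd a c ! \<pi> i) [0..<N]) ` A)"

end

theory Submission imports Defs begin

text \<open>Both parts reduce to one step of the doubling construction. For part 1, a swap of the two
  middle blocks of length m + 1 turns the double of V^\<lambda>_(H^m) into V^(\<lambda>_(2m+1))_(H^(2m+1)),
  since \<lambda>_(2m+1)(x + y, |x|, x) = \<lambda>_m(y); doubling commutes with coordinate permutations, so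
  induction on s gives the equivalence. For part 2, a weight-3 word c of H^m through coordinate j
  lifts to (c, 0, 0) through j and, after removing one further point of its support from c to get
  x, to (x + c, 0, x) through j + m + 1; both lifts are again weight-3 words of H^(2m+1), the lift
  is additive, and \<lambda>_(2m+1) takes the value \<lambda>_m(c) on the lift, so zeros and ones are carried
  over.\<close>

section \<open>Binary vectors\<close>

lemma mem_F_iff [simp]: "x \<in> F m \<longleftrightarrow> length x = m"
  by (simp add: F_def)

lemma length_vadd [simp]: "length (vadd x y) = min (length x) (length y)"
  by (simp add: vadd_def)

lemma nth_vadd [simp]: "i < length x \<Longrightarrow> i < length y \<Longrightarrow> vadd x y ! i = (x ! i \<noteq> y ! i)"
  by (simp add: vadd_def)

lemma vadd_Cons [simp]: "vadd (a # x) (b # y) = (a \<noteq> b) # vadd x y"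
  by (simp add: vadd_def)

lemma vadd_append: "length a = length c \<Longrightarrow> vadd (a @ b) (c @ d) = vadd a c @ vadd b d"
  by (simp add: vadd_def)

lemma vadd_append_Cons [simp]:
  "length a = length c \<Longrightarrow> vadd (a @ x # b) (c @ y # d) = vadd a c @ (x \<noteq> y) # vadd b d"
  by (simp add: vadd_def)

lemma vadd_commute: "vadd x y = vadd y x"
  by (rule nth_equalityI) auto

lemma length_zerov [simp]: "length (zerov m) = m"
  by (simp add: zerov_def)

lemma vadd_zerov_left [simp]: "length x = m \<Longrightarrow> vadd (zerov m) x = x"
  by (rule nth_equalityI) (auto simp: zerov_def)

lemma vadd_zerov_right [simp]: "length x = m \<Longrightarrow> vadd x (zerov m) = x"
  by (rule nth_equalityI) (auto simp: zerov_def)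

lemma vadd_vadd_cancel_left [simp]: "length x = length y \<Longrightarrow> vadd x (vadd x y) = y"
  by (rule nth_equalityI) auto

lemma zerov_double_Suc: "zerov (2 * m + 1) = zerov m @ False # zerov m"
  by (simp add: zerov_def flip: replicate_Suc replicate_add)

lemma wt_append [simp]: "wt (a @ b) = wt a + wt b"
  by (simp add: wt_def)

lemma wt_zerov [simp]: "wt (zerov m) = 0"
  by (simp add: wt_def zerov_def)

lemma wt_Cons [simp]: "wt (b # x) = (if b then Suc (wt x) else wt x)"
  by (simp add: wt_def)

lemma wt_eq_card: "wt x = card {i. i < length x \<and> x ! i}"
  by (simp add: wt_def length_filter_conv_card)

lemma wt_update_False: "b < length t \<Longrightarrow> t ! b \<Longrightarrow> wt (t[b := False]) = wt t - 1"
proof -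
  assume b: "b < length t" "t ! b"
  have "{i. i < length t \<and> t[b := False] ! i} = {i. i < length t \<and> t ! i} - {b}"
  proof (intro set_eqI)
    show "i \<in> {i. i < length t \<and> t[b := False] ! i} \<longleftrightarrow> i \<in> {i. i < length t \<and> t ! i} - {b}" for i
      by (cases "i = b") auto
  qed
  then show ?thesis using b by (simp add: wt_eq_card)
qed

lemma par_append [simp]: "par (a @ b) = (par a \<noteq> par b)"
  by (simp add: par_def)

lemma par_Nil [simp]: "par [] = False"
  by (simp add: par_def wt_def)

lemma par_Cons [simp]: "par (b # x) = (b \<noteq> par x)"
  by (simp add: par_def wt_def)

lemma par_zerov [simp]: "par (zerov m) = False"
  by (simp add: par_def wt_def zerov_def)

lemma par_vadd: "length x = length y \<Longrightarrow> par (vadd x y) = (par x \<noteq> par y)"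
  by (induction x y rule: list_induct2) (auto simp: vadd_def)

lemma double_word_eq_iff:
  assumes "length x = length y" "length x' = length y'" "length x = length x'"
  shows "vadd x y @ [par x] @ x = vadd x' y' @ [par x'] @ x' \<longleftrightarrow> x = x' \<and> y = y'"
proof
  assume "vadd x y @ [par x] @ x = vadd x' y' @ [par x'] @ x'"
  then have "vadd x y = vadd x' y' \<and> [par x] @ x = [par x'] @ x'"
    using assms by (subst (asm) append_eq_append_conv) auto
  then show "x = x' \<and> y = y'"
    using assms by (metis append_Cons append_Nil list.inject vadd_vadd_cancel_left)
qed simp

lemma double_memI: "length x = m \<Longrightarrow> y \<in> C \<Longrightarrow> vadd x y @ [par x] @ x \<in> double m C"
  unfolding double_def by auto

lemma Vcode_memI: "length x = m \<Longrightarrow> y \<in> H \<Longrightarrow> vadd x y @ [par x \<noteq> l y] @ x \<in> Vcode m H l"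
  unfolding Vcode_def by auto

lemma double_subset_F: "C \<subseteq> F m \<Longrightarrow> double m C \<subseteq> F (2 * m + 1)"
  by (auto simp: double_def)

lemma Vcode_subset_F: "H \<subseteq> F m \<Longrightarrow> Vcode m H l \<subseteq> F (2 * m + 1)"
  by (auto simp: Vcode_def)

lemma vadd_double_word:
  assumes "length x = m" "length y = m" "length x' = m" "length y' = m"
  shows "vadd (vadd x y @ [par x] @ x) (vadd x' y' @ [par x'] @ x')
    = vadd (vadd x x') (vadd y y') @ [par (vadd x x')] @ vadd x x'"
  using assms by (simp add: par_vadd) (rule nth_equalityI; auto)

lemma double_vadd_closed:
  assumes "C \<subseteq> F m" "\<And>y y'. y \<in> C \<Longrightarrow> y' \<in> C \<Longrightarrow> vadd y y' \<in> C"
    and "w \<in> double m C" "w' \<in> double m C"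
  shows "vadd w w' \<in> double m C"
proof -
  obtain x y x' y' where xy: "length x = m" "y \<in> C" "w = vadd x y @ [par x] @ x"
    and xy': "length x' = m" "y' \<in> C" "w' = vadd x' y' @ [par x'] @ x'"
    using assms(3,4) by (auto simp: double_def)
  have ly: "length y = m" "length y' = m" using xy(2) xy'(2) assms(1) by auto
  show ?thesis
    unfolding xy(3) xy'(3) vadd_double_word[OF xy(1) ly(1) xy'(1) ly(2)]
    using xy xy' assms(2) by (intro double_memI) auto
qed

lemma gf2span_subset:
  assumes "S \<subseteq> C" "zerov m \<in> C" "\<And>x y. x \<in> C \<Longrightarrow> y \<in> C \<Longrightarrow> vadd x y \<in> C"
  shows "gf2span m S \<subseteq> C"
proof
  show "c \<in> C" if "c \<in> gf2span m S" for c
    using that by induction (use assms in auto)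
qed

lemma gf2span_subset_F: "S \<subseteq> F m \<Longrightarrow> gf2span m S \<subseteq> F m"
  by (rule gf2span_subset) auto

lemma pierces_lift:
  assumes "pierces R \<mu>" "\<And>c. c \<in> R \<Longrightarrow> \<exists>w\<in>R'. \<mu>' w = \<mu> c"
  shows "pierces R' \<mu>'"
  using assms unfolding pierces_def by metis

section \<open>Coordinate permutations\<close>

definition permute_coords :: "(nat \<Rightarrow> nat) \<Rightarrow> nat \<Rightarrow> vec \<Rightarrow> vec" where
  "permute_coords p N c = map (\<lambda>i. c ! p i) [0..<N]"

definition perm_equiv :: "nat \<Rightarrow> vec set \<Rightarrow> vec set \<Rightarrow> bool" where
  "perm_equiv N A B \<longleftrightarrow> (\<exists>p. bij_betw p {..<N} {..<N} \<and> B = permute_coords p N ` A)"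

lemma length_permute_coords [simp]: "length (permute_coords p N c) = N"
  by (simp add: permute_coords_def)

lemma nth_permute_coords [simp]: "i < N \<Longrightarrow> permute_coords p N c ! i = c ! p i"
  by (simp add: permute_coords_def)

lemma permute_coords_id: "length c = N \<Longrightarrow> permute_coords id N c = c"
  by (rule nth_equalityI) auto

lemma permute_coords_comp:
  "(\<And>i. i < N \<Longrightarrow> p i < N) \<Longrightarrow> permute_coords p N (permute_coords q N c) = permute_coords (q \<circ> p) N c"
  by (rule nth_equalityI) auto

lemma permute_coords_vadd:
  "(\<And>i. i < N \<Longrightarrow> p i < N) \<Longrightarrow> length x = N \<Longrightarrow> length y = N \<Longrightarrow>
    permute_coords p N (vadd x y) = vadd (permute_coords p N x) (permute_coords p N y)"
  by (rule nth_equalityI) auto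

lemma wt_permute_coords:
  assumes p: "bij_betw p {..<N} {..<N}" and "length c = N"
  shows "wt (permute_coords p N c) = wt c"
proof -
  have "inj_on p {i. i < N \<and> c ! p i}"
    using p by (auto simp: bij_betw_def intro: inj_on_subset)
  moreover have "p ` {i. i < N \<and> c ! p i} = {i. i < N \<and> c ! i}"
  proof
    show "p ` {i. i < N \<and> c ! p i} \<subseteq> {i. i < N \<and> c ! i}"
      using p by (auto dest: bij_betwE)
    show "{i. i < N \<and> c ! i} \<subseteq> p ` {i. i < N \<and> c ! p i}"
      using bij_betw_imp_surj_on[OF p] by (auto simp: image_iff)
  qed
  moreover have "{i. i < N \<and> permute_coords p N c ! i} = {i. i < N \<and> c ! p i}"
    by auto
  ultimately show ?thesis
    using assms(2) by (simp add: wt_eq_card flip: card_image)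
qed

lemma par_permute_coords:
  "bij_betw p {..<N} {..<N} \<Longrightarrow> length c = N \<Longrightarrow> par (permute_coords p N c) = par c"
  by (simp add: par_def wt_permute_coords)

lemma perm_equiv_refl: "A \<subseteq> F N \<Longrightarrow> perm_equiv N A A"
  unfolding perm_equiv_def
  by (rule exI[of _ id]) (auto simp: permute_coords_id image_def subset_eq)

lemma perm_equiv_trans:
  assumes "perm_equiv N A B" "perm_equiv N B C"
  shows "perm_equiv N A C"
proof -
  obtain p where p: "bij_betw p {..<N} {..<N}" "B = permute_coords p N ` A"
    using assms(1) by (auto simp: perm_equiv_def)
  obtain q where q: "bij_betw q {..<N} {..<N}" "C = permute_coords q N ` B"
    using assms(2) by (auto simp: perm_equiv_def)
  have "\<And>i. i < N \<Longrightarrow> q i < N" using q(1) by (auto dest: bij_betwE)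
  then have "C = permute_coords (p \<circ> q) N ` A"
    using p(2) q(2) by (simp add: image_image permute_coords_comp)
  with p(1) q(1) show ?thesis
    unfolding perm_equiv_def by (blast intro: bij_betw_trans)
qed

lemma perm_equiv_imp_codes_equiv:
  assumes "perm_equiv N A B" "A \<subseteq> F N"
  shows "codes_equiv N A B"
proof -
  obtain p where "bij_betw p {..<N} {..<N}" "B = permute_coords p N ` A"
    using assms(1) by (auto simp: perm_equiv_def)
  moreover have "permute_coords p N c = map (\<lambda>i. vadd (zerov N) c ! p i) [0..<N]" if "c \<in> A" for c
    using that assms(2) by (auto simp: permute_coords_def)
  ultimately show ?thesis
    unfolding codes_equiv_def by (intro exI[of _ "zerov N"] exI[of _ p]) auto
qed

definition double_perm :: "nat \<Rightarrow> (nat \<Rightarrow> nat) \<Rightarrow> nat \<Rightarrow> nat" where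
  "double_perm m p i = (if i < m then p i else if i = m then m else m + 1 + p (i - m - 1))"

lemma double_perm_lt:
  assumes "\<And>i. i < m \<Longrightarrow> p i < m" "i < 2 * m + 1"
  shows "double_perm m p i < 2 * m + 1"
  using assms(1)[of i] assms(1)[of "i - m - 1"] assms(2) by (auto simp: double_perm_def)

lemma double_perm_inverse:
  "(\<And>i. i < m \<Longrightarrow> q (p i) = i \<and> p i < m) \<Longrightarrow> i < 2 * m + 1 \<Longrightarrow>
    double_perm m q (double_perm m p i) = i"
  by (auto simp: double_perm_def)

lemma bij_betw_double_perm:
  assumes p: "bij_betw p {..<m} {..<m}"
  shows "bij_betw (double_perm m p) {..<2 * m + 1} {..<2 * m + 1}"
proof -
  let ?q = "inv_into {..<m} p"
  have "bij_betw ?q {..<m} {..<m}" using p by (rule bij_betw_inv_into)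
  then have "\<And>i. i < m \<Longrightarrow> ?q (p i) = i \<and> p i < m" "\<And>i. i < m \<Longrightarrow> p (?q i) = i \<and> ?q i < m"
    using p by (auto simp: bij_betw_inv_into_left bij_betw_inv_into_right dest: bij_betwE)
  then show ?thesis
    using double_perm_inverse[of m p ?q] double_perm_inverse[of m ?q p]
      double_perm_lt[of m p] double_perm_lt[of m ?q]
    by (intro bij_betw_byWitness[where f' = "double_perm m ?q"]) auto
qed

lemma permute_double_perm:
  assumes "\<And>i. i < m \<Longrightarrow> p i < m" "length u = m" "length v = m"
  shows "permute_coords (double_perm m p) (2 * m + 1) (u @ [b] @ v)
    = permute_coords p m u @ [b] @ permute_coords p m v"
proof (rule nth_equalityI)
  fix i assume "i < length (permute_coords (double_perm m p) (2 * m + 1) (u @ [b] @ v))"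
  then consider "i < m" | "i = m" | k where "i = m + 1 + k" "k < m"
    by (metis add_Suc_right less_imp_Suc_add linorder_neqE_nat length_permute_coords
        add_less_cancel_left mult_2 Suc_eq_plus1 add_Suc)
  then show "permute_coords (double_perm m p) (2 * m + 1) (u @ [b] @ v) ! i
    = (permute_coords p m u @ [b] @ permute_coords p m v) ! i"
    by cases (use assms in \<open>auto simp: double_perm_def nth_append\<close>)
qed simp

lemma perm_equiv_double:
  assumes A: "A \<subseteq> F m" and "perm_equiv m A B"
  shows "perm_equiv (2 * m + 1) (double m A) (double m B)"
proof -
  obtain p where p: "bij_betw p {..<m} {..<m}" and B: "B = permute_coords p m ` A"
    using assms(2) by (auto simp: perm_equiv_def)
  have p_lt: "\<And>i. i < m \<Longrightarrow> p i < m" using p by (auto dest: bij_betwE)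
  have image: "permute_coords (double_perm m p) (2 * m + 1) (vadd x a @ [par x] @ x)
      = vadd (permute_coords p m x) (permute_coords p m a) @ [par (permute_coords p m x)]
          @ permute_coords p m x" if "length x = m" "a \<in> A" for x a
  proof -
    have "length a = m" using that A by auto
    then show ?thesis
      using that p permute_double_perm[OF p_lt, where u = "vadd x a" and v = x and b = "par x"]
      by (simp add: permute_coords_vadd[OF p_lt] par_permute_coords)
  qed
  have surj: "\<exists>x'. length x' = m \<and> permute_coords p m x' = x" if "length x = m" for x
  proof -
    have "x = permute_coords p m (permute_coords (inv_into {..<m} p) m x)"
      using that p p_lt by (intro nth_equalityI) (auto simp: bij_betw_inv_into_left)
    then show ?thesis by (metis length_permute_coords)
  qed
  have "double m B = permute_coords (double_perm m p) (2 * m + 1) ` double m A"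
  proof (rule set_eqI, rule iffI)
    fix w assume "w \<in> double m B"
    then obtain x a where x: "length x = m" and a: "a \<in> A"
      and w: "w = vadd x (permute_coords p m a) @ [par x] @ x"
      unfolding double_def B by auto
    obtain x' where x': "length x' = m" "permute_coords p m x' = x"
      using surj[OF x] by blast
    have "w = permute_coords (double_perm m p) (2 * m + 1) (vadd x' a @ [par x'] @ x')"
      using image[OF x'(1) a] x' w by simp
    moreover have "vadd x' a @ [par x'] @ x' \<in> double m A"
      using x' a by (intro double_memI)
    ultimately show "w \<in> permute_coords (double_perm m p) (2 * m + 1) ` double m A"
      by blast
  next
    fix w assume "w \<in> permute_coords (double_perm m p) (2 * m + 1) ` double m A"
    then obtain x a where x: "length x = m" "a \<in> A"
      and w: "w = permute_coords (double_perm m p) (2 * m + 1) (vadd x a @ [par x] @ x)"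
      unfolding double_def by auto
    show "w \<in> double m B"
      unfolding B w image[OF x] using x by (intro double_memI) auto
  qed
  with p show ?thesis
    unfolding perm_equiv_def by (blast intro: bij_betw_double_perm)
qed

definition block_swap :: "nat \<Rightarrow> nat \<Rightarrow> nat \<Rightarrow> nat" where
  "block_swap a L i = (if a \<le> i \<and> i < a + L then i + L else if a + L \<le> i \<and> i < a + 2 * L then i - L else i)"

lemma bij_betw_block_swap: "a + 2 * L \<le> N \<Longrightarrow> bij_betw (block_swap a L) {..<N} {..<N}"
  by (rule bij_betw_byWitness[where f' = "block_swap a L"]) (auto simp: block_swap_def)

lemma permute_block_swap:
  assumes "length u = a" "length v = L" "length w = L" "N = a + 2 * L + length z"
  shows "permute_coords (block_swap a L) N (u @ v @ w @ z) = u @ w @ v @ z"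
proof (rule nth_equalityI)
  fix i assume "i < length (permute_coords (block_swap a L) N (u @ v @ w @ z))"
  then consider "i < a" | k where "i = a + k" "k < L" | k where "i = a + L + k" "k < L"
    | k where "i = a + 2 * L + k" "k < length z"
    using assms(4) by (metis add.assoc le_add_diff_inverse mult_2 nat_add_left_cancel_less
        not_less length_permute_coords)
  then show "permute_coords (block_swap a L) N (u @ v @ w @ z) ! i = (u @ w @ v @ z) ! i"
    by cases (simp_all add: assms block_swap_def nth_append)
qed (use assms in simp)

section \<open>Doubling a code V^\<lambda>\<close>

lemma block_swap_double_Vcode_word:
  assumes "length a = m" "length c = m" "length u = m" "length y = m"
  shows "permute_coords (block_swap m (m + 1)) (4 * m + 3)
      (vadd (a @ b # c) (vadd u y @ [par u \<noteq> \<beta>] @ u) @ [par (a @ b # c)] @ a @ b # c)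
    = vadd (vadd c u @ b # c) (vadd (vadd a c) y @ [par (vadd a c)] @ vadd a c)
        @ [par (vadd c u @ b # c) \<noteq> \<beta>] @ vadd c u @ b # c"
proof -
  have "vadd (a @ b # c) (vadd u y @ [par u \<noteq> \<beta>] @ u) @ [par (a @ b # c)] @ a @ b # c
    = vadd a (vadd u y) @ ((b \<noteq> (par u \<noteq> \<beta>)) # vadd c u) @ ([par (a @ b # c)] @ a) @ b # c"
    using assms by simp
  moreover have "permute_coords (block_swap m (m + 1)) (4 * m + 3) \<dots>
    = vadd a (vadd u y) @ ([par (a @ b # c)] @ a) @ ((b \<noteq> (par u \<noteq> \<beta>)) # vadd c u) @ b # c"
    by (rule permute_block_swap) (use assms in simp_all)
  moreover have "vadd (vadd c u) (vadd (vadd a c) y) = vadd a (vadd u y)" "vadd c (vadd a c) = a"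
    using assms by (auto intro!: nth_equalityI)
  ultimately show ?thesis
    using assms
    by (cases b; cases \<beta>; cases "par a"; cases "par c"; cases "par u") (simp_all add: par_vadd)
qed

lemma split_middle: "length X = 2 * m + 1 \<Longrightarrow> \<exists>a b c. X = a @ b # c \<and> length a = m \<and> length c = m"
  by (intro exI[of _ "take m X"] exI[of _ "X ! m"] exI[of _ "drop (Suc m) X"])
     (simp add: id_take_nth_drop[symmetric])

lemma block_swap_double_Vcode:
  assumes H: "H \<subseteq> F m"
    and \<mu>': "\<And>v y. length v = m \<Longrightarrow> y \<in> H \<Longrightarrow> \<mu>' (vadd v y @ [par v] @ v) = \<mu> y"
  shows "permute_coords (block_swap m (m + 1)) (4 * m + 3) ` double (2 * m + 1) (Vcode m H \<mu>)
    = Vcode (2 * m + 1) (double m H) \<mu>'"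
proof (rule set_eqI, rule iffI)
  fix w assume "w \<in> permute_coords (block_swap m (m + 1)) (4 * m + 3) ` double (2 * m + 1) (Vcode m H \<mu>)"
  then obtain X w\<^sub>0 where X: "length X = 2 * m + 1" and w\<^sub>0: "w\<^sub>0 \<in> Vcode m H \<mu>"
    and w: "w = permute_coords (block_swap m (m + 1)) (4 * m + 3) (vadd X w\<^sub>0 @ [par X] @ X)"
    unfolding double_def by auto
  obtain u y where uy: "length u = m" "y \<in> H" and w\<^sub>0_eq: "w\<^sub>0 = vadd u y @ [par u \<noteq> \<mu> y] @ u"
    using w\<^sub>0 unfolding Vcode_def by auto
  obtain a b c where abc: "X = a @ b # c" "length a = m" "length c = m"
    using split_middle[OF X] by blast
  have "length y = m" using uy H by auto
  then have "w = vadd (vadd c u @ b # c) (vadd (vadd a c) y @ [par (vadd a c)] @ vadd a c)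
        @ [par (vadd c u @ b # c) \<noteq> \<mu>' (vadd (vadd a c) y @ [par (vadd a c)] @ vadd a c)]
        @ vadd c u @ b # c"
    unfolding w w\<^sub>0_eq abc(1) using abc uy
    by (simp only: \<mu>' length_vadd min.idem block_swap_double_Vcode_word)
  moreover have "vadd (vadd a c) y @ [par (vadd a c)] @ vadd a c \<in> double m H"
    using uy abc by (intro double_memI) auto
  moreover have "vadd c u @ b # c \<in> F (2 * m + 1)"
    using abc uy by simp
  ultimately show "w \<in> Vcode (2 * m + 1) (double m H) \<mu>'"
    unfolding Vcode_def by blast
next
  fix w assume "w \<in> Vcode (2 * m + 1) (double m H) \<mu>'"
  then obtain X y' where X: "length X = 2 * m + 1" and y': "y' \<in> double m H"
    and w: "w = vadd X y' @ [par X \<noteq> \<mu>' y'] @ X"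
    unfolding Vcode_def by auto
  obtain v y where vy: "length v = m" "y \<in> H" and y'_eq: "y' = vadd v y @ [par v] @ v"
    using y' unfolding double_def by auto
  obtain a' b c where abc: "X = a' @ b # c" "length a' = m" "length c = m"
    using split_middle[OF X] by blast
  define a where "a = vadd v c"
  define u where "u = vadd a' c"
  have lengths: "length a = m" "length u = m" "length y = m"
    using abc vy H unfolding a_def u_def by auto
  have "vadd c u = a'" "vadd a c = v"
    using abc vy unfolding a_def u_def by (auto intro!: nth_equalityI)
  have "permute_coords (block_swap m (m + 1)) (4 * m + 3)
      (vadd (a @ b # c) (vadd u y @ [par u \<noteq> \<mu> y] @ u) @ [par (a @ b # c)] @ a @ b # c)
    = vadd (vadd c u @ b # c) (vadd (vadd a c) y @ [par (vadd a c)] @ vadd a c)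
        @ [par (vadd c u @ b # c) \<noteq> \<mu> y] @ vadd c u @ b # c"
    using lengths abc by (intro block_swap_double_Vcode_word) auto
  also have "\<dots> = w"
    unfolding w abc(1) y'_eq \<open>vadd c u = a'\<close> \<open>vadd a c = v\<close> using \<mu>' vy by simp
  finally have "w = permute_coords (block_swap m (m + 1)) (4 * m + 3)
      (vadd (a @ b # c) (vadd u y @ [par u \<noteq> \<mu> y] @ u) @ [par (a @ b # c)] @ a @ b # c)" ..
  moreover have "vadd u y @ [par u \<noteq> \<mu> y] @ u \<in> Vcode m H \<mu>"
    using lengths vy by (intro Vcode_memI)
  moreover have "a @ b # c \<in> F (2 * m + 1)"
    using lengths abc by simp
  ultimately show "w \<in> permute_coords (block_swap m (m + 1)) (4 * m + 3) ` double (2 * m + 1) (Vcode m H \<mu>)"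
    unfolding double_def by blast
qed

section \<open>The sequences H^m, \<lambda>_m and C_i\<close>

lemma hlen_Suc: "hlen n (Suc j) = 2 * hlen n j + 1"
proof -
  define P where "P = 2 ^ j * (n + 1)"
  have "0 < P" "hlen n (Suc j) = 2 * P - 1" "hlen n j = P - 1"
    unfolding P_def hlen_def by simp_all
  then show ?thesis by linarith
qed

lemma hamH_subset_F: "H \<subseteq> F n \<Longrightarrow> hamH n H j \<subseteq> F (hlen n j)"
proof (induction j)
  case 0
  then show ?case by (simp add: hlen_def)
next
  case (Suc j)
  then show ?case using double_subset_F[OF Suc.IH] by (simp add: hlen_Suc)
qed

lemma zerov_mem_hamH: "zerov n \<in> H \<Longrightarrow> zerov (hlen n j) \<in> hamH n H j"
proof (induction j)
  case 0
  then show ?case by (simp add: hlen_def)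
next
  case (Suc j)
  let ?z = "zerov (hlen n j)"
  have "zerov (hlen n (Suc j)) = vadd ?z ?z @ [par ?z] @ ?z"
    unfolding hlen_Suc zerov_double_Suc by simp
  then show ?case using Suc by (simp only: hamH.simps double_memI length_zerov)
qed

lemma hamH_vadd_closed:
  assumes "H \<subseteq> F n" "\<And>x y. x \<in> H \<Longrightarrow> y \<in> H \<Longrightarrow> vadd x y \<in> H"
  shows "x \<in> hamH n H j \<Longrightarrow> y \<in> hamH n H j \<Longrightarrow> vadd x y \<in> hamH n H j"
proof (induction j arbitrary: x y)
  case 0
  then show ?case using assms(2) by simp
next
  case (Suc j)
  then show ?case
    using double_vadd_closed[OF hamH_subset_F[OF assms(1)] Suc.IH] by simp
qed

lemma Cseq_subset_F: "H \<subseteq> F n \<Longrightarrow> Cseq n H l s \<subseteq> F (hlen n (Suc s))"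
proof (induction s)
  case 0
  then show ?case using Vcode_subset_F[of H n l] by (simp add: hlen_def)
next
  case (Suc s)
  then show ?case using double_subset_F[OF Suc.IH] by (simp add: hlen_Suc[of n "Suc s"])
qed

lemma lamseq_Suc_double:
  assumes Hj: "hamH n H j \<subseteq> F (hlen n j)" and v: "length v = hlen n j" and y: "y \<in> hamH n H j"
  shows "lamseq n H l (Suc j) (vadd v y @ [par v] @ v) = lamseq n H l j y"
proof -
  let ?M = "hlen n j"
  have coset: "vadd (y' @ zerov (Suc ?M)) (x @ par x # x) = vadd x y' @ par x # x"
    if "length x = ?M" "length y' = ?M" for x y'
    using that by (simp add: vadd_append vadd_commute)
  have "(THE y'. y' \<in> hamH n H j \<and>
      (\<exists>x \<in> F ?M. vadd v y @ [par v] @ v = vadd (y' @ zerov (?M + 1)) (x @ [par x] @ x))) = y"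
  proof (rule the_equality)
    show "y \<in> hamH n H j \<and>
        (\<exists>x \<in> F ?M. vadd v y @ [par v] @ v = vadd (y @ zerov (?M + 1)) (x @ [par x] @ x))"
      using y v Hj by (intro conjI bexI[of _ v]) (auto simp: coset subset_eq)
  next
    fix y' assume "y' \<in> hamH n H j \<and>
        (\<exists>x \<in> F ?M. vadd v y @ [par v] @ v = vadd (y' @ zerov (?M + 1)) (x @ [par x] @ x))"
    then obtain x where "y' \<in> hamH n H j" "length x = ?M"
      "vadd v y @ [par v] @ v = vadd x y' @ [par x] @ x"
      using Hj by (auto simp: coset subset_eq)
    then show "y' = y"
      using y v Hj by (subst (asm) double_word_eq_iff) auto
  qed
  then show ?thesis by simp
qed

lemma perm_equiv_Cseq_Vcode:
  assumes H: "H \<subseteq> F n"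
  shows "perm_equiv (hlen n (Suc s)) (Cseq n H l s) (Vcode (hlen n s) (hamH n H s) (lamseq n H l s))"
proof (induction s)
  case 0
  show ?case using perm_equiv_refl[OF Vcode_subset_F[OF H, of l]] by (simp add: hlen_def)
next
  case (Suc s)
  let ?M = "hlen n s"
  have Hs: "hamH n H s \<subseteq> F ?M" using hamH_subset_F[OF H] .
  have len: "hlen n (Suc s) = 2 * ?M + 1" "hlen n (Suc (Suc s)) = 4 * ?M + 3"
    "2 * (2 * ?M + 1) + 1 = 4 * ?M + 3"
    by (simp_all add: hlen_Suc)
  have "perm_equiv (4 * ?M + 3) (Cseq n H l (Suc s))
      (double (2 * ?M + 1) (Vcode ?M (hamH n H s) (lamseq n H l s)))"
    using perm_equiv_double[OF Cseq_subset_F[OF H] Suc.IH] by (simp only: len Cseq.simps)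
  moreover have "permute_coords (block_swap ?M (?M + 1)) (4 * ?M + 3)
      ` double (2 * ?M + 1) (Vcode ?M (hamH n H s) (lamseq n H l s))
    = Vcode (2 * ?M + 1) (double ?M (hamH n H s)) (lamseq n H l (Suc s))"
    by (rule block_swap_double_Vcode[OF Hs]) (rule lamseq_Suc_double[OF Hs])
  then have "perm_equiv (4 * ?M + 3) (double (2 * ?M + 1) (Vcode ?M (hamH n H s) (lamseq n H l s)))
      (Vcode (2 * ?M + 1) (double ?M (hamH n H s)) (lamseq n H l (Suc s)))"
    unfolding perm_equiv_def using bij_betw_block_swap[of ?M "?M + 1" "4 * ?M + 3"]
    by (intro exI[of _ "block_swap ?M (?M + 1)"]) simp
  ultimately show ?case
    unfolding len(1,2) hamH.simps(2) by (rule perm_equiv_trans)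
qed

section \<open>Components of the doubled code\<close>

lemma component_subset:
  "zerov m \<in> C \<Longrightarrow> (\<And>x y. x \<in> C \<Longrightarrow> y \<in> C \<Longrightarrow> vadd x y \<in> C) \<Longrightarrow> component m C i \<subseteq> C"
  unfolding component_def by (rule gf2span_subset) auto

lemma component_subset_F: "C \<subseteq> F m \<Longrightarrow> component m C i \<subseteq> F m"
  unfolding component_def by (rule gf2span_subset_F) auto

lemma component_double_left:
  assumes C: "C \<subseteq> F m" and i: "1 \<le> i" "i \<le> m" and c: "c \<in> component m C i"
  shows "c @ False # zerov m \<in> component (2 * m + 1) (double m C) i"
  using c unfolding component_def
proof (induction rule: gf2span.induct)
  case zero
  show ?case unfolding zerov_double_Suc[symmetric] by (rule gf2span.zero)
next
  case (base t)
  then have "length t = m" using C by auto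
  then have "t @ False # zerov m \<in> double m C"
    using double_memI[of "zerov m" m t C] base by simp
  moreover have "(t @ False # zerov m) ! (i - 1) = t ! (i - 1)"
    using \<open>length t = m\<close> i by (intro nth_append_left) simp
  ultimately show ?case using base by (intro gf2span.base) simp
next
  case (add x y)
  have "length x = m" "length y = m"
    using add.hyps component_subset_F[OF C, of i] unfolding component_def by auto
  then have "vadd (x @ False # zerov m) (y @ False # zerov m) = vadd x y @ False # zerov m"
    by simp
  then show ?case using gf2span.add[OF add.IH] by simp
qed

lemma component_double_right:
  assumes C: "C \<subseteq> F m" and i: "1 \<le> i" "i \<le> m" and c: "c \<in> component m C i"
  shows "\<exists>x. length x = m \<and> vadd x c @ [par x] @ x \<in> component (2 * m + 1) (double m C) (i + m + 1)"
  using c unfolding component_def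
proof (induction rule: gf2span.induct)
  case zero
  have "vadd (zerov m) (zerov m) @ [par (zerov m)] @ zerov m = zerov (2 * m + 1)"
    unfolding zerov_double_Suc by simp
  then show ?case
    by (intro exI[of _ "zerov m"] conjI) (simp_all only: length_zerov gf2span.zero)
next
  case (base t)
  let ?k = "i - 1"
  have t: "t \<in> C" "wt t = 3" "t ! ?k" and lt: "length t = m" using base C by auto
  have "\<not> {j. j < length t \<and> t ! j} \<subseteq> {?k}"
  proof
    assume "{j. j < length t \<and> t ! j} \<subseteq> {?k}"
    then have "card {j. j < length t \<and> t ! j} \<le> card {?k}" by (intro card_mono) simp_all
    with t(2) show False by (simp add: wt_eq_card)
  qed
  then obtain b where b: "b < m" "t ! b" "b \<noteq> ?k" using lt by auto
  define x where "x = t[b := False]"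
  have lx: "length x = m" using lt by (simp add: x_def)
  have "wt x = 2" using wt_update_False[of b t] b lt t(2) by (simp add: x_def)
  then have px: "par x = False" by (simp add: par_def)
  have supp: "vadd x t ! j \<longleftrightarrow> j = b" if "j < m" for j
    using that b lt by (cases "j = b") (simp_all add: x_def)
  have "{j. j < length (vadd x t) \<and> vadd x t ! j} = {b}"
  proof (rule set_eqI)
    show "j \<in> {j. j < length (vadd x t) \<and> vadd x t ! j} \<longleftrightarrow> j \<in> {b}" for j
      using supp[of j] b lt lx by (cases "j < m") (simp_all del: nth_vadd)
  qed
  then have "wt (vadd x t) = 1" by (simp add: wt_eq_card)
  moreover have "i + m + 1 - 1 = length (vadd x t @ [par x]) + ?k"
    using i lx lt by simp
  then have "(vadd x t @ [par x] @ x) ! (i + m + 1 - 1) = x ! ?k"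
    by (simp only: append_assoc[symmetric] nth_append_length_plus)
  moreover have "x ! ?k" using b t(3) i lt by (simp add: x_def)
  moreover have "vadd x t @ [par x] @ x \<in> double m C"
    using lx t(1) by (rule double_memI)
  ultimately have "vadd x t @ [par x] @ x \<in> {w \<in> double m C. wt w = 3 \<and> w ! (i + m + 1 - 1)}"
    using px \<open>wt x = 2\<close> by simp
  then have "vadd x t @ [par x] @ x \<in> gf2span (2 * m + 1) {w \<in> double m C. wt w = 3 \<and> w ! (i + m + 1 - 1)}"
    by (rule gf2span.base)
  with lx show ?case by blast
next
  case (add c\<^sub>1 c\<^sub>2)
  obtain x\<^sub>1 x\<^sub>2 where x: "length x\<^sub>1 = m" "length x\<^sub>2 = m"
    and w: "vadd x\<^sub>1 c\<^sub>1 @ [par x\<^sub>1] @ x\<^sub>1 \<in> gf2span (2 * m + 1) {w \<in> double m C. wt w = 3 \<and> w ! (i + m + 1 - 1)}"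
      "vadd x\<^sub>2 c\<^sub>2 @ [par x\<^sub>2] @ x\<^sub>2 \<in> gf2span (2 * m + 1) {w \<in> double m C. wt w = 3 \<and> w ! (i + m + 1 - 1)}"
    using add.IH by blast
  have lc: "length c\<^sub>1 = m" "length c\<^sub>2 = m"
    using add.hyps component_subset_F[OF C, of i] unfolding component_def by auto
  have "vadd (vadd x\<^sub>1 x\<^sub>2) (vadd c\<^sub>1 c\<^sub>2) @ [par (vadd x\<^sub>1 x\<^sub>2)] @ vadd x\<^sub>1 x\<^sub>2
      \<in> gf2span (2 * m + 1) {w \<in> double m C. wt w = 3 \<and> w ! (i + m + 1 - 1)}"
    unfolding vadd_double_word[OF x(1) lc(1) x(2) lc(2), symmetric] by (rule gf2span.add[OF w])
  moreover have "length (vadd x\<^sub>1 x\<^sub>2) = m" using x by simp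
  ultimately show ?case by blast
qed

lemma pierces_component_double:
  assumes C: "C \<subseteq> F m" "zerov m \<in> C" "\<And>x y. x \<in> C \<Longrightarrow> y \<in> C \<Longrightarrow> vadd x y \<in> C"
    and \<mu>': "\<And>v y. length v = m \<Longrightarrow> y \<in> C \<Longrightarrow> \<mu>' (vadd v y @ [par v] @ v) = \<mu> y"
    and j: "1 \<le> j" "j \<le> m" and pierced: "pierces (component m C j) \<mu>"
  shows "pierces (component (2 * m + 1) (double m C) j) \<mu>'"
    and "pierces (component (2 * m + 1) (double m C) (j + m + 1)) \<mu>'"
proof -
  have mem: "c \<in> C \<and> length c = m" if "c \<in> component m C j" for c
    using that component_subset[OF C(2,3), of j] component_subset_F[OF C(1), of j] by auto
  then have lift: "\<mu>' (vadd x c @ [par x] @ x) = \<mu> c" if "c \<in> component m C j" "length x = m" for c x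
    using that \<mu>' by blast
  show "pierces (component (2 * m + 1) (double m C) j) \<mu>'"
  proof (rule pierces_lift[OF pierced])
    fix c assume c: "c \<in> component m C j"
    have "\<mu>' (c @ False # zerov m) = \<mu> c"
      using lift[OF c, of "zerov m"] mem[OF c] by simp
    then show "\<exists>w\<in>component (2 * m + 1) (double m C) j. \<mu>' w = \<mu> c"
      using component_double_left[OF C(1) j c] by blast
  qed
  show "pierces (component (2 * m + 1) (double m C) (j + m + 1)) \<mu>'"
  proof (rule pierces_lift[OF pierced])
    fix c assume c: "c \<in> component m C j"
    then show "\<exists>w\<in>component (2 * m + 1) (double m C) (j + m + 1). \<mu>' w = \<mu> c"
      using component_double_right[OF C(1) j c] lift by blast
  qed
qed

theorem lemma5:
  fixes n k s :: nat and H :: "vec set" and l :: "vec \<Rightarrow> bool"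
  assumes "n = 2 ^ k - 1"
    and "is_hamming_code n H"
    and "l (zerov n) = False"
  defines "N \<equiv> 2 ^ (s + 1) * (n + 1) - 1"
  shows "codes_equiv N (Cseq n H l s) (Vcode ((N - 1) div 2) (hamH n H s) (lamseq n H l s))
     \<and> (\<forall>j. 1 \<le> j \<and> j \<le> (N - 1) div 2 \<longrightarrow>
          pierces (component ((N - 1) div 2) (hamH n H s) j) (lamseq n H l s) \<longrightarrow>
            pierces (component N (hamH n H (Suc s)) j) (lamseq n H l (Suc s)) \<and>
            pierces (component N (hamH n H (Suc s)) (j + (N + 1) div 2)) (lamseq n H l (Suc s)))"
proof -
  have H: "H \<subseteq> F n" "zerov n \<in> H" "\<And>x y. x \<in> H \<Longrightarrow> y \<in> H \<Longrightarrow> vadd x y \<in> H"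
    using assms(2) unfolding is_hamming_code_def by blast+
  let ?M = "hlen n s"
  have N: "N = hlen n (Suc s)" "N = 2 * ?M + 1" "(N - 1) div 2 = ?M" "(N + 1) div 2 = ?M + 1"
    unfolding N_def hlen_Suc[symmetric] by (simp_all add: hlen_def hlen_Suc[unfolded hlen_def])
  have Hs: "hamH n H s \<subseteq> F ?M" by (rule hamH_subset_F[OF H(1)])
  have "codes_equiv N (Cseq n H l s) (Vcode ?M (hamH n H s) (lamseq n H l s))"
    unfolding N(1)
    by (rule perm_equiv_imp_codes_equiv[OF perm_equiv_Cseq_Vcode Cseq_subset_F]) (fact H(1))+
  moreover have "zerov ?M \<in> hamH n H s" by (rule zerov_mem_hamH[OF H(2)])
  moreover have "\<And>x y. x \<in> hamH n H s \<Longrightarrow> y \<in> hamH n H s \<Longrightarrow> vadd x y \<in> hamH n H s"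
    by (rule hamH_vadd_closed[OF H(1,3)])
  moreover have "\<And>v y. length v = ?M \<Longrightarrow> y \<in> hamH n H s \<Longrightarrow>
      lamseq n H l (Suc s) (vadd v y @ [par v] @ v) = lamseq n H l s y"
    by (rule lamseq_Suc_double[OF Hs])
  ultimately show ?thesis
    using pierces_component_double[OF Hs] unfolding N(2,3,4) by (simp add: add.assoc)
qed

end
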